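(* Let $f:\mathbb{R}\to\mathbb{R}$, $m:\mathbb{R}\to\mathbb{R}^n$ and $g:\mathbb{R}^n\times\mathbb{R}\times\mathbb{R}\to\mathbb{R}^{n\times m}$ satisfy: (i) $f$ is bounded and continuous and there are a function $M$ with $M(s)/s\to0$ as $s\to+\infty$ and a constant $f^\star<0$ such that $f^\star=\lim_{T\to+\infty}\frac{1}{2T}\int_{-T}^Tf(s)\,\mathrm{d}s$ and $\left|\int_{t_1}^{t_2}[f(s)-f^\star]\,\mathrm{d}s\right|\le M(t_2-t_1)$ whenever $t_2\ge t_1$; (ii) $m$ is continuous with $|m(t)|=1$ for all $t\in\mathbb{R}$, and there are constants $\alpha',\beta',\tilde c>0$ such that for all $t\in\mathbb{R}$, $\alpha>0$, $x\in\mathbb{R}^n$: $\alpha' I\le\int_t^{t+\tilde c}m(\tau)m^T(\tau)\,\mathrm{d}\tau\le\beta' I$ and $\|g(x,t,\alpha t)\|\le\beta'\{1+\sqrt{|x|}\}$; (iii) $g$ is continuous and $C^1$ in $x$, and there is $K>1$ with $|\partial g_{ij}(x,t,\alpha t)/\partial x|\le K$ for all $x$, $t\ge0$, $\alpha>0$ and all entries $g_{ij}$. Let $\kappa=\tilde c/(2|f^\star|)+\frac{1}{4\alpha'}\tilde c^4|f^\star|$ and $$P(t)=\kappa I+\int_{t-\tilde c}^t\int_s^t m(l)m^T(l)\,\mathrm{d}l\,\mathrm{d}s.$$ Then $V(x,t)=x^TP(t)x$ is a Lyapunov function for $\dot x=f^\star m(t)m^T(t)x$, and $W:=2V/\alpha'$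 admits constants $c_1,c_2,c_3>0$ such that for all $t\ge0$ and $\xi\in\mathbb{R}^n$: $c_1|\xi|^2\le W(\xi,t)\le c_2|\xi|^2$, $|W_\xi(\xi,t)|\le c_3|\xi|$, and $W_t(\xi,t)+W_\xi(\xi,t)f^\star m(t)m^T(t)\xi\le-|\xi|^2$.
   Context: $I$ is the $n\times n$ identity matrix, $\|\cdot\|$ the matrix 2-norm, and matrix inequalities are in the positive semidefinite order. A Lyapunov function for $\dot x=F(x,t)$ is a $C^1$ function $V:\mathbb{R}^n\times[0,\infty)\to[0,\infty)$ with $\delta_1,\delta_2\in\mathcal{K}_\infty$, $\delta_3\in\mathcal{K}$ such that $\delta_1(|\xi|)\le V(\xi,t)\le\delta_2(|\xi|)$ and $V_t+V_\xi F(\xi,t)\le-\delta_3(|\xi|)$ for all $\xi$, $t\ge0$ ($\mathcal{K}$: continuous, zero only at 0, strictly increasing; $\mathcal{K}_\infty$: also unbounded). *)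

theory Defs
  imports "HOL-Analysis.Analysis"
begin

definition outer :: "real^'n \<Rightarrow> real^'n^'n" where
  "outer v = (\<chi> i j. v $ i * v $ j)"

definition psd_le :: "real^'n^'n \<Rightarrow> real^'n^'n \<Rightarrow> bool" where
  "psd_le A B \<longleftrightarrow> (\<forall>x. x \<bullet> (A *v x) \<le> x \<bullet> (B *v x))"

definition mat_norm2 :: "real^'m^'n \<Rightarrow> real" where
  "mat_norm2 A = onorm (\<lambda>x. A *v x)"

definition class_K :: "(real \<Rightarrow> real) \<Rightarrow> bool" where
  "class_K d \<longleftrightarrow> continuous_on {0..} d \<and> d 0 = 0 \<and> strict_mono_on {0..} d"

definition class_K_inf :: "(real \<Rightarrow> real) \<Rightarrow> bool" where
  "class_K_inf d \<longleftrightarrow> class_K d \<and> filterlim d at_top at_top"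

definition C1_partials ::
  "(real^'n \<Rightarrow> real \<Rightarrow> real) \<Rightarrow> (real^'n \<Rightarrow> real \<Rightarrow> real^'n) \<Rightarrow> (real^'n \<Rightarrow> real \<Rightarrow> real) \<Rightarrow> bool" where
  "C1_partials V Vx Vt \<longleftrightarrow>
     (\<forall>\<xi> t. t \<ge> 0 \<longrightarrow>
        ((\<lambda>(x, s). V x s) has_derivative (\<lambda>(h, k). Vx \<xi> t \<bullet> h + Vt \<xi> t * k))
          (at (\<xi>, t) within UNIV \<times> {0..})) \<and>
     continuous_on (UNIV \<times> {0..}) (\<lambda>(\<xi>, t). Vx \<xi> t) \<and>
     continuous_on (UNIV \<times> {0..}) (\<lambda>(\<xi>, t). Vt \<xi> t)"

definition lyapunov_function ::
  "(real^'n \<Rightarrow> real \<Rightarrow> real) \<Rightarrow> (real^'n \<Rightarrow> real \<Rightarrow> real^'n) \<Rightarrow> bool" where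
  "lyapunov_function V F \<longleftrightarrow>
     (\<exists>Vx Vt d1 d2 d3. C1_partials V Vx Vt \<and>
        class_K_inf d1 \<and> class_K_inf d2 \<and> class_K d3 \<and>
        (\<forall>\<xi> t. t \<ge> 0 \<longrightarrow>
           0 \<le> V \<xi> t \<and> d1 (norm \<xi>) \<le> V \<xi> t \<and> V \<xi> t \<le> d2 (norm \<xi>) \<and>
           Vt \<xi> t + Vx \<xi> t \<bullet> F \<xi> t \<le> - d3 (norm \<xi>)))"

definition kappa :: "real \<Rightarrow> real \<Rightarrow> real \<Rightarrow> real" where
  "kappa c fstar \<alpha>' = c / (2 * \<bar>fstar\<bar>) + 1 / (4 * \<alpha>') * c ^ 4 * \<bar>fstar\<bar>"

definition Pmat :: "real \<Rightarrow> real \<Rightarrow> (real \<Rightarrow> real^'n) \<Rightarrow> real \<Rightarrow> real^'n^'n" where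
  "Pmat \<kappa> c m t = \<kappa> *\<^sub>R mat 1 +
     integral {t - c..t} (\<lambda>s. integral {s..t} (\<lambda>l. outer (m l)))"

end

theory Submission
  imports Defs
begin

(* Write P(t) = kappa I + Q(t) with Q(t) = integral_{t-c}^t integral_s^t m m^T. The integrand
   of xi^T Q(t) xi is (m^T xi)^2 <= |xi|^2, so V is sandwiched between kappa |xi|^2 and
   (kappa + c^2/2) |xi|^2. Differentiating under the integral signs gives
   P'(t) = c m(t) m(t)^T - integral_{t-c}^t m m^T, hence, with y = m(t)^T xi,
     V_t + V_xi F = c y^2 - xi^T (integral_{t-c}^t m m^T) xi + fstar y (2 kappa y + a1 + a2),
   where the cross terms a1, a2 come from Q and are at most c^2/2 |xi|. Persistent excitation
   bounds the integral term below by alpha' |xi|^2, and kappa is chosen so that the remaining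
   terms cost at most alpha'/2 |xi|^2; dividing by alpha'/2 gives W. *)

section \<open>Outer products and quadratic forms\<close>

lemma bounded_bilinear_matrix_vector_mult:
  "bounded_bilinear (\<lambda>(A::real^'n^'m) (x::real^'n). A *v x)"
  unfolding bilinear_conv_bounded_bilinear[symmetric] bilinear_def
  by (auto intro!: linearI simp: matrix_vector_mult_add_rdistrib matrix_vector_right_distrib
      scaleR_matrix_vector_assoc[symmetric] matrix_vector_mult_scaleR)

lemma outer_mult_vector: "outer v *v z = (v \<bullet> z) *\<^sub>R (v::real^'n)"
  by (simp add: vec_eq_iff outer_def matrix_vector_mult_def inner_vec_def sum_distrib_left
      mult.commute mult.left_commute)

lemma inner_outer_mult_vector: "y \<bullet> (outer v *v z) = (y \<bullet> v) * (v \<bullet> (z::real^'n))"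
  by (simp add: outer_mult_vector)

lemma continuous_on_outer: "continuous_on S m \<Longrightarrow> continuous_on S (\<lambda>t. outer (m t :: real^'n))"
  unfolding outer_def by (intro continuous_on_vec_lambda continuous_intros)

lemma continuous_on_transpose:
  "continuous_on S A \<Longrightarrow> continuous_on S (\<lambda>t. transpose (A t :: real^'n^'m))"
  unfolding transpose_def by (intro continuous_on_vec_lambda continuous_on_component)

lemma inner_integral_matrix_vector:
  fixes A :: "real \<Rightarrow> real^'n^'m"
  assumes "A integrable_on S"
  shows "y \<bullet> (integral S A *v z) = integral S (\<lambda>s. y \<bullet> (A s *v z))"
proof -
  have "bounded_linear (\<lambda>B::real^'n^'m. y \<bullet> (B *v z))"
    using bounded_linear_compose[OF bounded_linear_inner_right[of y]
        bounded_bilinear.bounded_linear_left[OF bounded_bilinear_matrix_vector_mult, of z]]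
    by simp
  from integral_linear[OF assms this] show ?thesis by (simp add: o_def)
qed

lemma norm_matrix_vector_le_bilinear_bound:
  fixes A :: "real^'n^'m"
  assumes bound: "\<And>y. \<bar>y \<bullet> (A *v z)\<bar> \<le> B * norm y * norm z" and "0 \<le> B"
  shows "norm (A *v z) \<le> B * norm z"
proof (cases "A *v z = 0")
  case False
  have "norm (A *v z) * norm (A *v z) \<le> B * norm z * norm (A *v z)"
    using bound[of "A *v z"] by (simp add: dot_square_norm power2_eq_square mult_ac)
  then show ?thesis using False by simp
qed (use assms in simp)

lemma norm_symmetrized_matrix_vector_le:
  fixes A :: "real^'n^'n"
  assumes bound: "\<And>y z. \<bar>y \<bullet> (A *v z)\<bar> \<le> B * norm y * norm z" and "0 \<le> B"
  shows "norm ((A + transpose A) *v x) \<le> 2 * B * norm x"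
proof (rule norm_matrix_vector_le_bilinear_bound)
  fix y
  have "y \<bullet> ((A + transpose A) *v x) = y \<bullet> (A *v x) + x \<bullet> (A *v y)"
    by (simp add: matrix_vector_mult_add_rdistrib inner_add_right)
      (metis dot_lmul_matrix inner_commute)
  then show "\<bar>y \<bullet> ((A + transpose A) *v x)\<bar> \<le> 2 * B * norm y * norm x"
    using bound[of y x] bound[of x y] by (simp add: mult_ac)
qed (use assms in simp)

section \<open>Integrals over a sliding window\<close>

lemma integral_has_vector_derivative_at:
  fixes h :: "real \<Rightarrow> 'a::banach"
  assumes "continuous_on {a..b} h" "a < t" "t < b"
  shows "((\<lambda>u. integral {a..u} h) has_vector_derivative h t) (at t)"
proof -
  have t: "t \<in> interior {a..b}"
    using assms by (simp only: interior_atLeastAtMost_real greaterThanLessThan_iff)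
  have "((\<lambda>u. integral {a..u} h) has_vector_derivative h t) (at t within {a..b})"
    using assms by (intro integral_has_vector_derivative) auto
  then show ?thesis
    unfolding at_within_interior[OF t] .
qed

lemma integral_eq_indefinite_integral_diff:
  fixes h :: "real \<Rightarrow> 'a::banach"
  assumes "h integrable_on {a..b}" "a \<le> s" "s \<le> u" "u \<le> b"
  shows "integral {s..u} h = integral {a..u} h - integral {a..s} h"
proof -
  have "h integrable_on {a..u}"
    using integrable_on_subinterval[OF assms(1)] assms by simp
  from Henstock_Kurzweil_Integration.integral_combine[OF assms(2,3) this] show ?thesis
    by (metis add_diff_cancel_left')
qed

lemma has_vector_derivative_integral_window:
  fixes h :: "real \<Rightarrow> 'a::banach"
  assumes cont: "continuous_on {a..b} h" and "0 \<le> c" "a + c < t" "t < b"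
  shows "((\<lambda>u. integral {u - c..u} h) has_vector_derivative h t - h (t - c)) (at t)"
proof -
  let ?H = "\<lambda>u. integral {a..u} h"
  have shift: "((\<lambda>u. u - c) has_vector_derivative 1) (at t)"
    by (auto intro!: derivative_eq_intros simp flip: has_real_derivative_iff_has_vector_derivative)
  have "((\<lambda>u. ?H (u - c)) has_vector_derivative h (t - c)) (at t)"
    using vector_diff_chain_at[OF shift integral_has_vector_derivative_at[OF cont]] assms
    by (simp add: o_def)
  then have deriv: "((\<lambda>u. ?H u - ?H (u - c)) has_vector_derivative h t - h (t - c)) (at t)"
    using assms by (intro has_vector_derivative_diff integral_has_vector_derivative_at) auto
  have eq: "?H u - ?H (u - c) = integral {u - c..u} h" if "u \<in> {a + c<..<b}" for u
    using that \<open>0 \<le> c\<close>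
      integral_eq_indefinite_integral_diff[OF integrable_continuous_real[OF cont], of "u - c" u]
    by auto
  have "t \<in> {a + c<..<b}"
    using assms by simp
  from has_vector_derivative_transform_within_open[OF deriv open_greaterThanLessThan this eq]
  show ?thesis .
qed

lemma continuous_on_integral_window:
  fixes h :: "real \<Rightarrow> 'a::banach"
  assumes "continuous_on UNIV h" "0 \<le> c"
  shows "continuous_on UNIV (\<lambda>u. integral {u - c..u} h)"
proof -
  have "isCont (\<lambda>u. integral {u - c..u} h) t" for t
  proof (rule has_vector_derivative_continuous)
    show "((\<lambda>u. integral {u - c..u} h) has_vector_derivative h t - h (t - c)) (at t)"
      using assms
      by (intro has_vector_derivative_integral_window[of "t - c - 1" "t + 1"]
          continuous_on_subset[OF assms(1)]) auto
  qed
  then show ?thesis by (simp add: continuous_at_imp_continuous_on)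
qed

definition double_window_integral :: "real \<Rightarrow> (real \<Rightarrow> 'a::banach) \<Rightarrow> real \<Rightarrow> 'a" where
  "double_window_integral c h t = integral {t - c..t} (\<lambda>s. integral {s..t} h)"

lemma has_vector_derivative_double_window_integral:
  fixes h :: "real \<Rightarrow> 'a::banach"
  assumes cont: "continuous_on UNIV h" and "0 \<le> c"
  shows "(double_window_integral c h has_vector_derivative
      c *\<^sub>R h t - integral {t - c..t} h) (at t)"
proof -
  define a b where "a = t - c - 1" and "b = t + 1"
  let ?H = "\<lambda>u. integral {a..u} h"
  have h_cont: "continuous_on {a..b} h"
    using cont by (rule continuous_on_subset) simp
  have h_int: "h integrable_on {a..b}"
    by (rule integrable_continuous_interval[OF h_cont])
  have H_cont: "continuous_on {a..b} ?H"
    by (rule indefinite_integral_continuous_1[OF h_int])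
  have H_window: "?H t - ?H (t - c) = integral {t - c..t} h"
    using \<open>0 \<le> c\<close>
    by (intro integral_eq_indefinite_integral_diff[OF h_int, symmetric]) (auto simp: a_def b_def)
  have deriv: "((\<lambda>u. c *\<^sub>R ?H u - integral {u - c..u} ?H) has_vector_derivative
      c *\<^sub>R h t - integral {t - c..t} h) (at t)"
    unfolding H_window[symmetric]
  proof (rule has_vector_derivative_diff)
    show "((\<lambda>u. c *\<^sub>R ?H u) has_vector_derivative c *\<^sub>R h t) (at t)"
      by (rule bounded_linear.has_vector_derivative[OF bounded_linear_scaleR_right
            integral_has_vector_derivative_at[OF h_cont]])
        (use \<open>0 \<le> c\<close> in \<open>simp_all add: a_def b_def\<close>)
    show "((\<lambda>u. integral {u - c..u} ?H) has_vector_derivative ?H t - ?H (t - c)) (at t)"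
      by (rule has_vector_derivative_integral_window[OF H_cont \<open>0 \<le> c\<close>]) (simp_all add: a_def b_def)
  qed
  have eq: "c *\<^sub>R ?H u - integral {u - c..u} ?H = double_window_integral c h u"
    if "u \<in> {a + c<..<b}" for u
  proof -
    have "double_window_integral c h u = integral {u - c..u} (\<lambda>s. ?H u - ?H s)"
      unfolding double_window_integral_def
      using that by (intro integral_cong integral_eq_indefinite_integral_diff[OF h_int]) auto
    also have "\<dots> = integral {u - c..u} (\<lambda>s. ?H u) - integral {u - c..u} ?H"
    proof (rule integral_diff)
      show "?H integrable_on {u - c..u}"
        using that by (intro integrable_continuous_interval continuous_on_subset[OF H_cont]) auto
    qed (rule Henstock_Kurzweil_Integration.integrable_const_ivl)
    also have "\<dots> = c *\<^sub>R ?H u - integral {u - c..u} ?H"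
      using \<open>0 \<le> c\<close> by simp
    finally show ?thesis by simp
  qed
  have "t \<in> {a + c<..<b}"
    by (simp add: a_def b_def)
  from has_vector_derivative_transform_within_open[OF deriv open_greaterThanLessThan this eq]
  show ?thesis .
qed

lemma integral_window_linear:
  fixes t c B :: real
  assumes "0 \<le> c"
  shows "integral {t - c..t} (\<lambda>s. (t - s) * B) = c\<^sup>2 / 2 * B"
proof -
  define F where "F s = (t * s - s\<^sup>2 / 2) * B" for s :: real
  have "((\<lambda>s. (t - s) * B) has_integral F t - F (t - c)) {t - c..t}"
  proof (rule fundamental_theorem_of_calculus)
    fix s
    show "(F has_vector_derivative (t - s) * B) (at s within {t - c..t})"
      unfolding F_def has_real_derivative_iff_has_vector_derivative[symmetric]
      by (auto intro!: derivative_eq_intros simp: algebra_simps)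
  qed (use assms in simp)
  moreover have "F t - F (t - c) = c\<^sup>2 / 2 * B"
    by (simp add: F_def power2_eq_square field_simps)
  ultimately show ?thesis
    by (metis integral_unique)
qed

lemma integrable_on_integral_to_upper:
  fixes h :: "real \<Rightarrow> 'a::banach"
  assumes "continuous_on {a..t} h"
  shows "(\<lambda>s. integral {s..t} h) integrable_on {a..t}"
  by (intro integrable_continuous_interval indefinite_integral_continuous_1'
      integrable_continuous_interval[OF assms])

lemma norm_double_window_integral_le:
  fixes h :: "real \<Rightarrow> 'a::banach"
  assumes cont: "continuous_on {t - c..t} h" and bound: "\<And>l. l \<in> {t - c..t} \<Longrightarrow> norm (h l) \<le> B"
    and "0 \<le> c"
  shows "norm (double_window_integral c h t) \<le> c\<^sup>2 / 2 * B"
proof -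
  have "norm (double_window_integral c h t) \<le> integral {t - c..t} (\<lambda>s. (t - s) * B)"
    unfolding double_window_integral_def
  proof (rule integral_norm_bound_integral)
    show "(\<lambda>s. integral {s..t} h) integrable_on {t - c..t}"
      by (rule integrable_on_integral_to_upper[OF cont])
    show "(\<lambda>s. (t - s) * B) integrable_on {t - c..t}"
      by (intro integrable_continuous_interval continuous_intros)
    fix s
    assume s: "s \<in> {t - c..t}"
    have "norm (integral {s..t} h) \<le> integral {s..t} (\<lambda>l. B)"
      using s
      by (intro integral_norm_bound_integral integrable_continuous_interval bound
          continuous_on_subset[OF cont]) auto
    with s show "norm (integral {s..t} h) \<le> (t - s) * B"
      by simp
  qed
  also have "\<dots> = c\<^sup>2 / 2 * B"
    by (rule integral_window_linear[OF \<open>0 \<le> c\<close>])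
  finally show ?thesis .
qed

lemma double_window_integral_nonneg:
  fixes h :: "real \<Rightarrow> real"
  assumes cont: "continuous_on {t - c..t} h" and "\<And>l. l \<in> {t - c..t} \<Longrightarrow> 0 \<le> h l"
  shows "0 \<le> double_window_integral c h t"
  unfolding double_window_integral_def
  using assms
  by (intro integral_nonneg integrable_on_integral_to_upper integrable_continuous_interval
      continuous_on_subset[OF cont]) auto

lemma inner_double_window_integral_outer:
  fixes m :: "real \<Rightarrow> real^'n"
  assumes cont: "continuous_on {t - c..t} m"
  shows "y \<bullet> (double_window_integral c (\<lambda>l. outer (m l)) t *v z)
    = double_window_integral c (\<lambda>l. (y \<bullet> m l) * (m l \<bullet> z)) t"
proof -
  have outer_cont: "continuous_on {t - c..t} (\<lambda>l. outer (m l))"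
    by (rule continuous_on_outer[OF cont])
  have inner: "y \<bullet> (integral {s..t} (\<lambda>l. outer (m l)) *v z)
      = integral {s..t} (\<lambda>l. (y \<bullet> m l) * (m l \<bullet> z))"
    if "s \<in> {t - c..t}" for s
    using that
    by (subst inner_integral_matrix_vector)
      (auto simp: inner_outer_mult_vector
        intro!: integrable_continuous_interval continuous_on_subset[OF outer_cont])
  show ?thesis
    unfolding double_window_integral_def
      inner_integral_matrix_vector[OF integrable_on_integral_to_upper[OF outer_cont]]
    by (rule integral_cong) (rule inner)
qed

lemma inner_double_window_integral_outer_bound:
  fixes m :: "real \<Rightarrow> real^'n"
  assumes cont: "continuous_on {t - c..t} m" and unit: "\<And>l. norm (m l) \<le> 1" and "0 \<le> c"
  shows "\<bar>y \<bullet> (double_window_integral c (\<lambda>l. outer (m l)) t *v z)\<bar> \<le> c\<^sup>2 / 2 * norm y * norm z"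
proof -
  have "\<bar>(y \<bullet> m l) * (m l \<bullet> z)\<bar> \<le> norm y * norm z" for l
  proof -
    have "\<bar>y \<bullet> m l\<bar> \<le> norm y"
      using Cauchy_Schwarz_ineq2[of y "m l"] mult_left_le[OF unit[of l] norm_ge_zero[of y]]
      by linarith
    moreover have "\<bar>m l \<bullet> z\<bar> \<le> norm z"
      using Cauchy_Schwarz_ineq2[of "m l" z] mult_left_le[OF unit[of l] norm_ge_zero[of z]]
      by (simp add: mult.commute)
    ultimately show ?thesis
      by (simp add: abs_mult mult_mono')
  qed
  then have "norm (double_window_integral c (\<lambda>l. (y \<bullet> m l) * (m l \<bullet> z)) t)
      \<le> c\<^sup>2 / 2 * (norm y * norm z)"
    using cont \<open>0 \<le> c\<close> by (intro norm_double_window_integral_le continuous_intros) auto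
  then show ?thesis
    by (simp add: inner_double_window_integral_outer[OF cont] mult.assoc)
qed

section \<open>Quadratic Lyapunov functions\<close>

lemma has_derivative_quadratic_form:
  fixes A :: "real \<Rightarrow> real^'n^'n"
  assumes "(A has_vector_derivative A') (at t within S)"
  shows "((\<lambda>(x, s). x \<bullet> (A s *v x)) has_derivative
      (\<lambda>(h, q). ((A t + transpose (A t)) *v \<xi>) \<bullet> h + (\<xi> \<bullet> (A' *v \<xi>)) * q))
    (at (\<xi>, t) within UNIV \<times> S)"
proof -
  have "((A \<circ> snd) has_derivative (\<lambda>q. q *\<^sub>R A') \<circ> snd) (at (\<xi>, t) within UNIV \<times> S)"
    using assms unfolding has_vector_derivative_def
    by (intro diff_chain_within has_derivative_snd[OF has_derivative_ident]) (auto simp: image_def)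
  from bounded_bilinear.FDERIV[OF bounded_bilinear_matrix_vector_mult this
      has_derivative_fst[OF has_derivative_ident]]
  have "((\<lambda>p. A (snd p) *v fst p) has_derivative
      (\<lambda>hq. A t *v fst hq + (snd hq *\<^sub>R A') *v \<xi>)) (at (\<xi>, t) within UNIV \<times> S)"
    by (simp add: o_def)
  from bounded_bilinear.FDERIV[OF bounded_bilinear_inner
      has_derivative_fst[OF has_derivative_ident] this]
  show ?thesis
    unfolding split_def
    by (rule has_derivative_eq_rhs)
      (auto simp: fun_eq_iff inner_add_left inner_add_right matrix_vector_mult_add_rdistrib
        dot_lmul_matrix scaleR_matrix_vector_assoc[symmetric] inner_commute[of _ "A t *v \<xi>"])
qed

lemma C1_partials_quadratic_form:
  fixes A A' :: "real \<Rightarrow> real^'n^'n"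
  assumes deriv: "\<And>t. t \<ge> 0 \<Longrightarrow> (A has_vector_derivative A' t) (at t within {0..})"
    and cont: "continuous_on {0..} A'"
  shows "C1_partials (\<lambda>x t. x \<bullet> (A t *v x))
    (\<lambda>\<xi> t. (A t + transpose (A t)) *v \<xi>) (\<lambda>\<xi> t. \<xi> \<bullet> (A' t *v \<xi>))"
  unfolding C1_partials_def
proof (intro conjI allI impI)
  fix \<xi> :: "real^'n" and t :: real
  assume "t \<ge> 0"
  from has_derivative_quadratic_form[OF deriv[OF this]]
  show "((\<lambda>(x, s). x \<bullet> (A s *v x)) has_derivative
      (\<lambda>(h, q). ((A t + transpose (A t)) *v \<xi>) \<bullet> h + (\<xi> \<bullet> (A' t *v \<xi>)) * q))
    (at (\<xi>, t) within UNIV \<times> {0..})" .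
next
  have "continuous_on {0..} A"
    using deriv
    by (auto simp: continuous_on_eq_continuous_within intro: has_vector_derivative_continuous)
  then have "continuous_on (UNIV \<times> {0..}) (\<lambda>p::(real^'n) \<times> real. A (snd p) + transpose (A (snd p)))"
    by (intro continuous_on_add continuous_on_transpose
        continuous_on_compose2[OF _ continuous_on_snd]) auto
  from bounded_bilinear.continuous_on[OF bounded_bilinear_matrix_vector_mult this
      continuous_on_fst[OF continuous_on_id]]
  show "continuous_on (UNIV \<times> {0..}) (\<lambda>(\<xi>, t). (A t + transpose (A t)) *v \<xi>)"
    by (simp add: split_def)
next
  have "continuous_on (UNIV \<times> {0..}) (\<lambda>p::(real^'n) \<times> real. A' (snd p))"
    by (rule continuous_on_compose2[OF cont continuous_on_snd]) auto
  then have "continuous_on (UNIV \<times> {0..}) (\<lambda>p::(real^'n) \<times> real. fst p \<bullet> (A' (snd p) *v fst p))"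
    by (intro continuous_on_inner continuous_on_fst continuous_on_id
        bounded_bilinear.continuous_on[OF bounded_bilinear_matrix_vector_mult])
  then show "continuous_on (UNIV \<times> {0..}) (\<lambda>(\<xi>, t). \<xi> \<bullet> (A' t *v \<xi>))"
    by (simp add: split_def)
qed

lemma C1_partials_scale:
  fixes V :: "real^'n \<Rightarrow> real \<Rightarrow> real"
  assumes "C1_partials V Vx Vt"
  shows "C1_partials (\<lambda>x t. r * V x t) (\<lambda>x t. r *\<^sub>R Vx x t) (\<lambda>x t. r * Vt x t)"
  unfolding C1_partials_def
proof (intro conjI allI impI)
  fix \<xi> :: "real^'n" and t :: real
  assume "t \<ge> 0"
  with assms have "((\<lambda>(x, s). V x s) has_derivative (\<lambda>(h, k). Vx \<xi> t \<bullet> h + Vt \<xi> t * k))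
      (at (\<xi>, t) within UNIV \<times> {0..})"
    unfolding C1_partials_def by blast
  from has_derivative_mult_right[OF this, of r]
  show "((\<lambda>(x, s). r * V x s) has_derivative (\<lambda>(h, k). r *\<^sub>R Vx \<xi> t \<bullet> h + r * Vt \<xi> t * k))
      (at (\<xi>, t) within UNIV \<times> {0..})"
    by (simp add: case_prod_unfold algebra_simps)
qed (use assms in \<open>auto simp: C1_partials_def case_prod_unfold intro!: continuous_intros\<close>)

lemma class_K_inf_scaled_square: "0 < a \<Longrightarrow> class_K_inf (\<lambda>r. a * r\<^sup>2)"
  unfolding class_K_inf_def class_K_def
proof (intro conjI)
  assume "0 < a"
  show "continuous_on {0..} (\<lambda>r::real. a * r\<^sup>2)"
    by (intro continuous_intros)
  show "strict_mono_on {0..} (\<lambda>r::real. a * r\<^sup>2)"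
    by (rule strict_mono_onI)
      (use \<open>0 < a\<close> in \<open>auto intro!: mult_strict_left_mono power_strict_mono\<close>)
  show "filterlim (\<lambda>r::real. a * r\<^sup>2) at_top at_top"
    by (rule filterlim_tendsto_pos_mult_at_top[OF tendsto_const \<open>0 < a\<close>])
      (rule filterlim_pow_at_top[OF _ filterlim_ident], simp)
qed simp

lemma lyapunov_function_quadratic_bounds:
  fixes V :: "real^'n \<Rightarrow> real \<Rightarrow> real"
  assumes "C1_partials V Vx Vt" "0 < a" "0 < b" "0 < d"
    and "\<And>\<xi> t. t \<ge> 0 \<Longrightarrow> a * (norm \<xi>)\<^sup>2 \<le> V \<xi> t"
    and "\<And>\<xi> t. t \<ge> 0 \<Longrightarrow> V \<xi> t \<le> b * (norm \<xi>)\<^sup>2"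
    and "\<And>\<xi> t. t \<ge> 0 \<Longrightarrow> Vt \<xi> t + Vx \<xi> t \<bullet> F \<xi> t \<le> - (d * (norm \<xi>)\<^sup>2)"
  shows "lyapunov_function V F"
  unfolding lyapunov_function_def
proof (intro exI conjI allI impI)
  show "C1_partials V Vx Vt"
    by (rule assms(1))
  show "class_K_inf (\<lambda>r. a * r\<^sup>2)" "class_K_inf (\<lambda>r. b * r\<^sup>2)"
    using assms(2,3) by (simp_all add: class_K_inf_scaled_square)
  show "class_K (\<lambda>r. d * r\<^sup>2)"
    using class_K_inf_scaled_square[OF \<open>0 < d\<close>] by (simp add: class_K_inf_def)
  fix \<xi> :: "real^'n" and t :: real
  assume "t \<ge> 0"
  show "a * (norm \<xi>)\<^sup>2 \<le> V \<xi> t" "V \<xi> t \<le> b * (norm \<xi>)\<^sup>2"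
    "Vt \<xi> t + Vx \<xi> t \<bullet> F \<xi> t \<le> - (d * (norm \<xi>)\<^sup>2)"
    using assms(5-7) \<open>t \<ge> 0\<close> by auto
  show "0 \<le> V \<xi> t"
    by (rule order_trans[OF _ assms(5)[OF \<open>t \<ge> 0\<close>]]) (use \<open>0 < a\<close> in simp)
qed

lemma quadratic_lyapunov_estimates_normalized:
  fixes V :: "real^'n \<Rightarrow> real \<Rightarrow> real"
  assumes C1: "C1_partials V Vx Vt" and "0 < a" "0 < b" "0 < g" "0 < d"
    and lower: "\<And>\<xi> t. t \<ge> 0 \<Longrightarrow> a * (norm \<xi>)\<^sup>2 \<le> V \<xi> t"
    and upper: "\<And>\<xi> t. t \<ge> 0 \<Longrightarrow> V \<xi> t \<le> b * (norm \<xi>)\<^sup>2"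
    and gradient: "\<And>\<xi> t. t \<ge> 0 \<Longrightarrow> norm (Vx \<xi> t) \<le> g * norm \<xi>"
    and decrease: "\<And>\<xi> t. t \<ge> 0 \<Longrightarrow> Vt \<xi> t + Vx \<xi> t \<bullet> F \<xi> t \<le> - (d * (norm \<xi>)\<^sup>2)"
  shows "\<exists>Wx Wt c1 c2 c3. C1_partials (\<lambda>x t. V x t / d) Wx Wt \<and> c1 > 0 \<and> c2 > 0 \<and> c3 > 0 \<and>
    (\<forall>\<xi> t. t \<ge> 0 \<longrightarrow>
      c1 * (norm \<xi>)\<^sup>2 \<le> V \<xi> t / d \<and> V \<xi> t / d \<le> c2 * (norm \<xi>)\<^sup>2 \<and>
      norm (Wx \<xi> t) \<le> c3 * norm \<xi> \<and>
      Wt \<xi> t + Wx \<xi> t \<bullet> F \<xi> t \<le> - (norm \<xi>)\<^sup>2)"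
proof (intro exI conjI allI impI)
  show "C1_partials (\<lambda>x t. V x t / d) (\<lambda>x t. (1 / d) *\<^sub>R Vx x t) (\<lambda>x t. 1 / d * Vt x t)"
    using C1_partials_scale[OF C1, of "1 / d"] by simp
  show "0 < a / d" "0 < b / d" "0 < g / d"
    using assms(2-5) by simp_all
  fix \<xi> :: "real^'n" and t :: real
  assume "t \<ge> 0"
  show "a / d * (norm \<xi>)\<^sup>2 \<le> V \<xi> t / d"
    using divide_right_mono[OF lower[OF \<open>t \<ge> 0\<close>, of \<xi>], of d] \<open>0 < d\<close> by simp
  show "V \<xi> t / d \<le> b / d * (norm \<xi>)\<^sup>2"
    using divide_right_mono[OF upper[OF \<open>t \<ge> 0\<close>, of \<xi>], of d] \<open>0 < d\<close> by simp
  show "norm ((1 / d) *\<^sub>R Vx \<xi> t) \<le> g / d * norm \<xi>"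
    using divide_right_mono[OF gradient[OF \<open>t \<ge> 0\<close>, of \<xi>], of d] \<open>0 < d\<close> by simp
  have "1 / d * Vt \<xi> t + (1 / d) *\<^sub>R Vx \<xi> t \<bullet> F \<xi> t = (Vt \<xi> t + Vx \<xi> t \<bullet> F \<xi> t) / d"
    by (simp add: add_divide_distrib)
  also have "\<dots> \<le> - (d * (norm \<xi>)\<^sup>2) / d"
    by (rule divide_right_mono[OF decrease[OF \<open>t \<ge> 0\<close>]]) (use \<open>0 < d\<close> in simp)
  finally show "1 / d * Vt \<xi> t + (1 / d) *\<^sub>R Vx \<xi> t \<bullet> F \<xi> t \<le> - (norm \<xi>)\<^sup>2"
    using \<open>0 < d\<close> by simp
qed

section \<open>The matrix P\<close>

lemma Pmat_eq_double_window_integral: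
  "Pmat \<kappa> c m t = \<kappa> *\<^sub>R mat 1 + double_window_integral c (\<lambda>l. outer (m l)) t"
  by (simp add: Pmat_def double_window_integral_def)

definition Pmat_deriv :: "real \<Rightarrow> (real \<Rightarrow> real^'n) \<Rightarrow> real \<Rightarrow> real^'n^'n" where
  "Pmat_deriv c m t = c *\<^sub>R outer (m t) - integral {t - c..t} (\<lambda>l. outer (m l))"

lemma has_vector_derivative_Pmat:
  assumes "continuous_on UNIV m" "0 \<le> c"
  shows "(Pmat \<kappa> c m has_vector_derivative Pmat_deriv c m t) (at t)"
proof -
  have "(double_window_integral c (\<lambda>l. outer (m l)) has_vector_derivative Pmat_deriv c m t) (at t)"
    unfolding Pmat_deriv_def
    by (rule has_vector_derivative_double_window_integral[OF continuous_on_outer[OF assms(1)]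
          assms(2)])
  from has_vector_derivative_add[OF has_vector_derivative_const this]
  show ?thesis
    by (simp add: Pmat_eq_double_window_integral[abs_def])
qed

lemma continuous_on_Pmat_deriv:
  assumes "continuous_on UNIV m" "0 \<le> c"
  shows "continuous_on S (Pmat_deriv c m)"
proof -
  have "continuous_on UNIV (Pmat_deriv c m)"
    unfolding Pmat_deriv_def[abs_def]
    using assms
    by (intro continuous_on_diff continuous_on_scaleR continuous_on_const continuous_on_outer
        continuous_on_integral_window)
  then show ?thesis
    by (rule continuous_on_subset) simp
qed

lemma C1_partials_Pmat:
  assumes "continuous_on UNIV m" "0 \<le> c"
  shows "C1_partials (\<lambda>x t. x \<bullet> (Pmat \<kappa> c m t *v x))
    (\<lambda>\<xi> t. (Pmat \<kappa> c m t + transpose (Pmat \<kappa> c m t)) *v \<xi>) (\<lambda>\<xi> t. \<xi> \<bullet> (Pmat_deriv c m t *v \<xi>))"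
proof (rule C1_partials_quadratic_form)
  show "(Pmat \<kappa> c m has_vector_derivative Pmat_deriv c m t) (at t within {0..})" for t
    using has_vector_derivative_Pmat[OF assms] by (rule has_vector_derivative_at_within)
qed (rule continuous_on_Pmat_deriv[OF assms])

lemma inner_Pmat:
  "y \<bullet> (Pmat \<kappa> c m t *v z) = \<kappa> * (y \<bullet> z) + y \<bullet> (double_window_integral c (\<lambda>l. outer (m l)) t *v z)"
  by (simp add: Pmat_eq_double_window_integral matrix_vector_mult_add_rdistrib
      scaleR_matrix_vector_assoc[symmetric] inner_add_right)

lemma Pmat_bilinear_bound:
  assumes "continuous_on UNIV m" "\<And>l. norm (m l) \<le> 1" "0 \<le> c" "0 \<le> \<kappa>"
  shows "\<bar>y \<bullet> (Pmat \<kappa> c m t *v z)\<bar> \<le> (\<kappa> + c\<^sup>2 / 2) * norm y * norm z"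
proof -
  have "\<bar>\<kappa> * (y \<bullet> z)\<bar> \<le> \<kappa> * norm y * norm z"
    using Cauchy_Schwarz_ineq2[of y z] \<open>0 \<le> \<kappa>\<close>
    by (simp add: abs_mult mult.assoc mult_left_mono)
  moreover have "\<bar>y \<bullet> (double_window_integral c (\<lambda>l. outer (m l)) t *v z)\<bar>
      \<le> c\<^sup>2 / 2 * norm y * norm z"
    using assms
    by (intro inner_double_window_integral_outer_bound) (auto intro: continuous_on_subset)
  ultimately show ?thesis
    unfolding inner_Pmat by (simp add: algebra_simps abs_triangle_ineq[THEN order_trans])
qed

lemma Pmat_quadratic_bounds:
  assumes "continuous_on UNIV m" "\<And>l. norm (m l) \<le> 1" "0 \<le> c" "0 \<le> \<kappa>"
  shows "\<kappa> * (norm x)\<^sup>2 \<le> x \<bullet> (Pmat \<kappa> c m t *v x)"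
    and "x \<bullet> (Pmat \<kappa> c m t *v x) \<le> (\<kappa> + c\<^sup>2 / 2) * (norm x)\<^sup>2"
proof -
  have "0 \<le> double_window_integral c (\<lambda>l. (x \<bullet> m l) * (m l \<bullet> x)) t"
    using assms(1) by (intro double_window_integral_nonneg continuous_intros)
      (auto simp: inner_commute intro: continuous_on_subset)
  then show "\<kappa> * (norm x)\<^sup>2 \<le> x \<bullet> (Pmat \<kappa> c m t *v x)"
    using assms(1)
    by (simp add: inner_Pmat inner_double_window_integral_outer power2_norm_eq_inner
        continuous_on_subset)
  show "x \<bullet> (Pmat \<kappa> c m t *v x) \<le> (\<kappa> + c\<^sup>2 / 2) * (norm x)\<^sup>2"
    using abs_le_D1[OF Pmat_bilinear_bound[OF assms, of x t x]]
    by (simp add: power2_eq_square mult.assoc)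
qed

(* With phi = |fstar|, kappa is chosen so that 2 kappa phi = c + c^4 phi^2 / (2 alpha): the first
   summand cancels c y^2, the second absorbs the cross term phi |y| c^2 N by AM-GM. *)
lemma kappa_decrease_ineq:
  fixes fstar \<alpha> c y N A a1 a2 :: real
  assumes "fstar < 0" "0 < \<alpha>" "\<alpha> * N\<^sup>2 \<le> A" "\<bar>a1\<bar> \<le> c\<^sup>2 / 2 * N" "\<bar>a2\<bar> \<le> c\<^sup>2 / 2 * N"
  shows "c * y\<^sup>2 - A + fstar * y * (2 * kappa c fstar \<alpha> * y + a1 + a2) \<le> - (\<alpha> / 2) * N\<^sup>2"
proof -
  define u where "u = c\<^sup>2 * \<bar>fstar\<bar> * \<bar>y\<bar>"
  have kappa: "fstar * (2 * kappa c fstar \<alpha>) * y\<^sup>2 = - c * y\<^sup>2 - u\<^sup>2 / (2 * \<alpha>)"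
    unfolding kappa_def u_def using assms(1,2)
    by (simp add: field_simps power2_eq_square eval_nat_numeral)
  have cross: "fstar * y * (a1 + a2) \<le> u * N"
  proof -
    have "fstar * y * (a1 + a2) \<le> \<bar>fstar\<bar> * (\<bar>y\<bar> * \<bar>a1 + a2\<bar>)"
      by (metis abs_ge_self abs_mult mult.assoc)
    also have "\<dots> \<le> \<bar>fstar\<bar> * (\<bar>y\<bar> * (c\<^sup>2 * N))"
      using assms(4,5) by (intro mult_left_mono) auto
    finally show ?thesis
      by (simp add: u_def mult_ac)
  qed
  have amgm: "u * N \<le> u\<^sup>2 / (2 * \<alpha>) + \<alpha> / 2 * N\<^sup>2"
  proof -
    have "0 \<le> (u - \<alpha> * N)\<^sup>2 / (2 * \<alpha>)"
      using assms(2) by simp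
    also have "\<dots> = u\<^sup>2 / (2 * \<alpha>) + \<alpha> / 2 * N\<^sup>2 - u * N"
      using assms(2) by (simp add: power2_eq_square field_simps)
    finally show ?thesis by simp
  qed
  have "c * y\<^sup>2 - A + fstar * y * (2 * kappa c fstar \<alpha> * y + a1 + a2)
      = c * y\<^sup>2 - A + fstar * (2 * kappa c fstar \<alpha>) * y\<^sup>2 + fstar * y * (a1 + a2)"
    by (simp add: algebra_simps power2_eq_square)
  with kappa cross amgm assms(3) show ?thesis
    by linarith
qed

lemma Pmat_quadratic_form_decrease:
  fixes m :: "real \<Rightarrow> real^'n" and c fstar \<alpha> t :: real
  defines "P \<equiv> Pmat (kappa c fstar \<alpha>) c m t"
  assumes m_cont: "continuous_on UNIV m" and m_norm: "\<And>l. norm (m l) \<le> 1"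
    and "fstar < 0" "0 < \<alpha>" "0 \<le> c"
    and excitation: "psd_le (\<alpha> *\<^sub>R mat 1) (integral {t - c..t} (\<lambda>l. outer (m l)))"
  shows "\<xi> \<bullet> (Pmat_deriv c m t *v \<xi>)
      + ((P + transpose P) *v \<xi>) \<bullet> (fstar *\<^sub>R (outer (m t) *v \<xi>))
    \<le> - (\<alpha> / 2) * (norm \<xi>)\<^sup>2"
proof -
  let ?\<kappa> = "kappa c fstar \<alpha>"
  let ?Q = "double_window_integral c (\<lambda>l. outer (m l)) t"
  define y where "y = m t \<bullet> \<xi>"
  have A: "\<alpha> * (norm \<xi>)\<^sup>2 \<le> \<xi> \<bullet> (integral {t - c..t} (\<lambda>l. outer (m l)) *v \<xi>)"
    using excitation unfolding psd_le_def
    by (auto simp: scaleR_matrix_vector_assoc[symmetric] power2_norm_eq_inner)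
  have Q_bound: "\<bar>u \<bullet> (?Q *v v)\<bar> \<le> c\<^sup>2 / 2 * norm u * norm v" for u v
    using assms
    by (intro inner_double_window_integral_outer_bound) (auto intro: continuous_on_subset)
  have shrink: "c\<^sup>2 / 2 * norm (m t) * norm v \<le> c\<^sup>2 / 2 * norm v" for v
    using m_norm[of t] by (intro mult_right_mono mult_left_le) auto
  have a1: "\<bar>m t \<bullet> (?Q *v \<xi>)\<bar> \<le> c\<^sup>2 / 2 * norm \<xi>"
    using Q_bound[of "m t" \<xi>] shrink[of \<xi>] by linarith
  have a2: "\<bar>\<xi> \<bullet> (?Q *v m t)\<bar> \<le> c\<^sup>2 / 2 * norm \<xi>"
    using Q_bound[of \<xi> "m t"] shrink[of \<xi>] by (simp add: mult_ac)
  have Vt: "\<xi> \<bullet> (Pmat_deriv c m t *v \<xi>)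
      = c * y\<^sup>2 - \<xi> \<bullet> (integral {t - c..t} (\<lambda>l. outer (m l)) *v \<xi>)"
    by (simp add: Pmat_deriv_def y_def matrix_vector_mult_diff_rdistrib inner_diff_right
        scaleR_matrix_vector_assoc[symmetric] inner_outer_mult_vector power2_eq_square
        inner_commute)
  have "(transpose P *v \<xi>) \<bullet> m t = \<xi> \<bullet> (P *v m t)"
    by (simp add: dot_lmul_matrix)
  then have "((P + transpose P) *v \<xi>) \<bullet> m t
      = 2 * ?\<kappa> * y + m t \<bullet> (?Q *v \<xi>) + \<xi> \<bullet> (?Q *v m t)"
    unfolding matrix_vector_mult_add_rdistrib inner_add_left
    by (simp add: inner_commute[of _ "m t"] P_def inner_Pmat y_def)
  then have Vx: "((P + transpose P) *v \<xi>) \<bullet> (fstar *\<^sub>R (outer (m t) *v \<xi>))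
      = fstar * y * (2 * ?\<kappa> * y + m t \<bullet> (?Q *v \<xi>) + \<xi> \<bullet> (?Q *v m t))"
    by (simp add: outer_mult_vector y_def)
  show ?thesis
    unfolding Vt Vx using kappa_decrease_ineq[OF \<open>fstar < 0\<close> \<open>0 < \<alpha>\<close> A a1 a2] .
qed

theorem lemma3:
  fixes f :: "real \<Rightarrow> real" and M :: "real \<Rightarrow> real" and fstar :: real
    and m :: "real \<Rightarrow> real^'n"
    and g :: "real^'n \<Rightarrow> real \<Rightarrow> real \<Rightarrow> real^'k^'n"
    and Dg :: "'n \<Rightarrow> 'k \<Rightarrow> real^'n \<Rightarrow> real \<Rightarrow> real \<Rightarrow> real^'n"
    and \<alpha>' \<beta>' c K :: real
  assumes f_bdd: "bounded (range f)" and f_cont: "continuous_on UNIV f"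
    and M_lim: "((\<lambda>s. M s / s) \<longlongrightarrow> 0) at_top"
    and fstar_neg: "fstar < 0"
    and f_avg: "((\<lambda>T. integral {-T..T} f / (2 * T)) \<longlongrightarrow> fstar) at_top"
    and f_dev: "\<And>t1 t2. t1 \<le> t2 \<Longrightarrow> \<bar>integral {t1..t2} (\<lambda>s. f s - fstar)\<bar> \<le> M (t2 - t1)"
    and m_cont: "continuous_on UNIV m" and m_unit: "\<And>t. norm (m t) = 1"
    and pos: "\<alpha>' > 0" "\<beta>' > 0" "c > 0"
    and PE: "\<And>t. psd_le (\<alpha>' *\<^sub>R mat 1) (integral {t..t+c} (\<lambda>\<tau>. outer (m \<tau>)))
              \<and> psd_le (integral {t..t+c} (\<lambda>\<tau>. outer (m \<tau>))) (\<beta>' *\<^sub>R mat 1)"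
    and g_bd: "\<And>t a x. a > 0 \<Longrightarrow> mat_norm2 (g x t (a * t)) \<le> \<beta>' * (1 + sqrt (norm x))"
    and g_cont: "continuous_on UNIV (\<lambda>(x, t, a). g x t a)"
    and g_C1: "\<And>i j x t a. ((\<lambda>y. g y t a $ i $ j) has_derivative (\<lambda>h. Dg i j x t a \<bullet> h)) (at x)"
    and Dg_cont: "\<And>i j t a. continuous_on UNIV (\<lambda>x. Dg i j x t a)"
    and K_gt: "K > 1"
    and Dg_bd: "\<And>i j x t a. t \<ge> 0 \<Longrightarrow> a > 0 \<Longrightarrow> norm (Dg i j x t (a * t)) \<le> K"
  defines "V \<equiv> (\<lambda>x t. x \<bullet> (Pmat (kappa c fstar \<alpha>') c m t *v x))"
    and "F \<equiv> (\<lambda>x t. fstar *\<^sub>R (outer (m t) *v x))"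
    and "W \<equiv> (\<lambda>x t. 2 * (x \<bullet> (Pmat (kappa c fstar \<alpha>') c m t *v x)) / \<alpha>')"
  shows "lyapunov_function V F \<and>
    (\<exists>Wx Wt c1 c2 c3. C1_partials W Wx Wt \<and> c1 > 0 \<and> c2 > 0 \<and> c3 > 0 \<and>
       (\<forall>\<xi> t. t \<ge> 0 \<longrightarrow>
          c1 * (norm \<xi>)\<^sup>2 \<le> W \<xi> t \<and> W \<xi> t \<le> c2 * (norm \<xi>)\<^sup>2 \<and>
          norm (Wx \<xi> t) \<le> c3 * norm \<xi> \<and>
          Wt \<xi> t + Wx \<xi> t \<bullet> F \<xi> t \<le> - (norm \<xi>)\<^sup>2))"
proof -
  let ?\<kappa> = "kappa c fstar \<alpha>'"
  let ?P = "Pmat ?\<kappa> c m"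
  have c: "0 \<le> c" and \<alpha>: "0 < \<alpha>'"
    using pos by auto
  have \<kappa>: "0 < ?\<kappa>"
    unfolding kappa_def using pos fstar_neg by (intro add_pos_pos divide_pos_pos mult_pos_pos) auto
  have m_norm: "\<And>l. norm (m l) \<le> 1"
    using m_unit by simp
  define Vx where "Vx = (\<lambda>\<xi> t. (?P t + transpose (?P t)) *v \<xi>)"
  define Vt where "Vt = (\<lambda>\<xi> t. \<xi> \<bullet> (Pmat_deriv c m t *v \<xi>))"
  have C1: "C1_partials V Vx Vt"
    unfolding V_def Vx_def Vt_def by (rule C1_partials_Pmat[OF m_cont c])
  note bounds = Pmat_quadratic_bounds[OF m_cont m_norm c less_imp_le[OF \<kappa>]]
  have gradient: "norm (Vx \<xi> t) \<le> 2 * (?\<kappa> + c\<^sup>2 / 2) * norm \<xi>" for \<xi> t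
    unfolding Vx_def using \<kappa>
    by (intro norm_symmetrized_matrix_vector_le Pmat_bilinear_bound[OF m_cont m_norm c]) auto
  have decrease: "Vt \<xi> t + Vx \<xi> t \<bullet> F \<xi> t \<le> - (\<alpha>' / 2 * (norm \<xi>)\<^sup>2)" for \<xi> t
    using Pmat_quadratic_form_decrease[OF m_cont m_norm fstar_neg \<alpha> c, of t \<xi>] PE[of "t - c"]
    unfolding Vt_def Vx_def F_def by simp
  have "W = (\<lambda>x t. V x t / (\<alpha>' / 2))"
    unfolding W_def V_def by (simp add: fun_eq_iff)
  then show ?thesis
    using \<kappa> \<alpha> bounds gradient decrease
    by (simp only:, intro conjI
        lyapunov_function_quadratic_bounds[OF C1, of ?\<kappa> "?\<kappa> + c\<^sup>2 / 2" "\<alpha>' / 2"]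
        quadratic_lyapunov_estimates_normalized[OF C1, of ?\<kappa> "?\<kappa> + c\<^sup>2 / 2"
          "2 * (?\<kappa> + c\<^sup>2 / 2)"])
      (auto simp: V_def intro: add_pos_nonneg)
qed

end
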